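(* Let $Q=q-E$ where $E\in\mathbb R$ and $q$ is a real random variable, symmetric about $0$, with $\mathbb E[\log(1+q^2)]<\infty$, $\mathbb E[q^2]>0$, and such that the distribution of $q^2$ is not supported on a single point. Let $\zeta\in\mathbb C^+$ satisfy $|\zeta|>1$, $\operatorname{Re}(\zeta+1/\zeta+E)=0$ and $\mathbb E[\log|\alpha(\zeta,q-E)|^2]=0$. Then $$\inf_{w\in\mathbb R}\ \mathbb E\Big[\log\frac{|\zeta|^2\,|w+1/\zeta-Q|^2}{|w-\zeta|^2}\Big]>0.$$
   Context: For $a\in\mathbb R$, $b>0$ and real $Q$, $\alpha(a+bi,Q)=\frac1b\big(a+\frac{a}{a^2+b^2}-Q\big)+\frac{i}{a^2+b^2}$. *)

theory Defs
  imports "HOL-Probability.Probability"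
begin

definition alpha :: "complex \<Rightarrow> real \<Rightarrow> complex" where
  "alpha z Q = Complex ((Re z + Re z / ((Re z)\<^sup>2 + (Im z)\<^sup>2) - Q) / Im z)
                       (1 / ((Re z)\<^sup>2 + (Im z)\<^sup>2))"

end

theory Submission
  imports Defs
begin

text \<open>
  Write \<zeta> = a + i b with b > 0, r = |\<zeta>|^2 > 1, and put
  \<sigma>(q) = (q/b)^2 + (1/r)^2.  The condition Re (\<zeta> + 1/\<zeta> + E) = 0 turns
  |\<alpha>(\<zeta>, q - E)|^2 into \<sigma>(q), so the hypotheses say E[ln \<sigma>] = 0, and, with
  t = w - a, the integrand becomes ln r - ln (t^2 + b^2) + ln ((t - q)^2 + (b/r)^2).
  Symmetry of the law of q lets us replace ln ((t - q)^2 + c) by the average of the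
  values at q and -q, whose product is b^4 ((\<sigma> - \<rho>)^2 + 4 \<rho> \<epsilon>) with
  \<rho> = (t/b)^2, \<epsilon> = (1/r)^2.  The heart of the proof is the elementary inequality
     ln ((\<sigma> - \<rho>)^2 + 4 \<rho> \<epsilon>) \<ge> (1-\<rho>)/(1+\<rho>) ln \<sigma> + ln \<epsilon> + 2 ln (1 + \<rho>) + gain,
  where the gain is a fixed positive constant when \<sigma> lies in a band [1 + \<eta>, S].
  Integrating it kills the ln \<sigma> term and leaves the gain times the probability of
  the band, independently of w.  Since q^2 is not a.s. constant while E[ln \<sigma>] = 0,
  some band has positive probability, which gives a uniform positive lower bound.
\<close>

lemma ln_concave_combination:
  fixes w x y :: real
  assumes "0 \<le> w" "w \<le> 1" "0 < x" "0 < y"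
  shows "w * ln x + (1 - w) * ln y \<le> ln (w * x + (1 - w) * y)"
  using assms ln_concave by (simp add: concave_on_iff)

(* Concavity at the points \<sigma> and 1 with weight 1/(1+\<rho>); this is why the
   coefficient (1-\<rho>)/(1+\<rho>) of ln \<sigma> appears in the main inequality. *)
lemma ln_mean_lower_bound:
  fixes \<sigma> \<rho> :: real
  assumes "0 < \<sigma>" "0 \<le> \<rho>"
  shows "ln \<sigma> / (1 + \<rho>) \<le> ln (\<sigma> + \<rho>) - ln (1 + \<rho>)"
proof -
  have pos: "0 < 1 + \<rho>" using assms by simp
  have "(1 / (1 + \<rho>)) * ln \<sigma> + (1 - 1 / (1 + \<rho>)) * ln 1
          \<le> ln ((1 / (1 + \<rho>)) * \<sigma> + (1 - 1 / (1 + \<rho>)) * 1)"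
    using assms by (intro ln_concave_combination) auto
  also have "(1 / (1 + \<rho>)) * \<sigma> + (1 - 1 / (1 + \<rho>)) * 1 = (\<sigma> + \<rho>) / (1 + \<rho>)"
    using pos by (simp add: divide_simps)
  finally show ?thesis using assms pos by (simp add: ln_div)
qed

(* Quantitative concavity: the gap in Jensen's inequality for ln at 1 and 1 + x
   with weight w is at least min w (1-w) times the midpoint gap. *)
lemma ln_mean_gain:
  fixes w x :: real
  assumes "0 < w" "w \<le> 1" "0 \<le> x"
  shows "min w (1 - w) * ln (1 + x\<^sup>2 / (4 * (1 + x))) \<le> ln (1 + w * x) - w * ln (1 + x)"
proof -
  have midpoint: "ln (1 + x\<^sup>2 / (4 * (1 + x))) = 2 * ln (1 + x / 2) - ln (1 + x)"
  proof -
    have "1 + x\<^sup>2 / (4 * (1 + x)) = (1 + x / 2)\<^sup>2 / (1 + x)"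
      using assms by (simp add: field_simps power2_eq_square)
    thus ?thesis using assms by (simp add: ln_div ln_realpow)
  qed
  show ?thesis
  proof (cases "w \<le> 1 / 2")
    case True
    have "(2 * w) * ln (1 + x / 2) + (1 - 2 * w) * ln 1 \<le> ln ((2 * w) * (1 + x / 2) + (1 - 2 * w) * 1)"
      using assms True by (intro ln_concave_combination) auto
    also have "(2 * w) * (1 + x / 2) + (1 - 2 * w) * 1 = 1 + w * x" by (simp add: algebra_simps)
    finally show ?thesis using True unfolding midpoint by (simp add: algebra_simps)
  next
    case False
    have "(2 * w - 1) * ln (1 + x) + (1 - (2 * w - 1)) * ln (1 + x / 2)
            \<le> ln ((2 * w - 1) * (1 + x) + (1 - (2 * w - 1)) * (1 + x / 2))"
      using assms False by (intro ln_concave_combination) auto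
    also have "(2 * w - 1) * (1 + x) + (1 - (2 * w - 1)) * (1 + x / 2) = 1 + w * x"
      by (simp add: algebra_simps)
    finally show ?thesis using False unfolding midpoint by (simp add: algebra_simps)
  qed
qed

lemma quartic_identity:
  fixes \<sigma> \<rho> \<epsilon> :: real
  shows "\<sigma> * ((\<sigma> - \<rho>)\<^sup>2 + 4 * \<rho> * \<epsilon>) = \<epsilon> * (\<sigma> + \<rho>)\<^sup>2 + (\<sigma> - \<epsilon>) * (\<sigma> - \<rho>)\<^sup>2"
  by (simp add: power2_eq_square algebra_simps)

lemma ln_quartic_from_factor:
  fixes \<sigma> \<rho> \<epsilon> \<kappa> :: real
  assumes "0 < \<epsilon>" "0 < \<sigma>" "0 \<le> \<rho>" "0 < \<kappa>"
    and factor: "(\<kappa> - 1) * \<epsilon> * (\<sigma> + \<rho>)\<^sup>2 \<le> (\<sigma> - \<epsilon>) * (\<sigma> - \<rho>)\<^sup>2"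
  shows "ln \<kappa> + ln \<epsilon> + 2 * ln (\<sigma> + \<rho>) - ln \<sigma> \<le> ln ((\<sigma> - \<rho>)\<^sup>2 + 4 * \<rho> * \<epsilon>)"
proof -
  have "\<kappa> * \<epsilon> * (\<sigma> + \<rho>)\<^sup>2 \<le> \<sigma> * ((\<sigma> - \<rho>)\<^sup>2 + 4 * \<rho> * \<epsilon>)"
    using factor unfolding quartic_identity by (simp add: algebra_simps)
  hence "\<kappa> * \<epsilon> * (\<sigma> + \<rho>)\<^sup>2 / \<sigma> \<le> (\<sigma> - \<rho>)\<^sup>2 + 4 * \<rho> * \<epsilon>"
    using assms by (simp add: divide_simps mult.commute)
  hence "ln (\<kappa> * \<epsilon> * (\<sigma> + \<rho>)\<^sup>2 / \<sigma>) \<le> ln ((\<sigma> - \<rho>)\<^sup>2 + 4 * \<rho> * \<epsilon>)"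
    using assms by (intro ln_mono) auto
  thus ?thesis using assms by (simp add: ln_mult ln_div ln_realpow)
qed

lemma lambda_log_split:
  fixes \<sigma> \<rho> :: real
  assumes "0 \<le> \<rho>"
  shows "(1 - \<rho>) / (1 + \<rho>) * ln \<sigma> = 2 * (ln \<sigma> / (1 + \<rho>)) - ln \<sigma>"
proof -
  have "1 + \<rho> \<noteq> 0" using assms by simp
  thus ?thesis by (simp add: field_simps)
qed

lemma ln_mean_gain_near:
  fixes \<sigma> \<rho> \<eta> S :: real
  assumes "0 < \<eta>" "1 + \<eta> \<le> \<sigma>" "\<sigma> \<le> S" "\<sigma> / 2 \<le> \<rho>" "\<rho> \<le> 2 * \<sigma>"
  shows "ln (1 + \<eta>\<^sup>2 / (4 * S)) / (1 + 2 * S) \<le> ln (\<sigma> + \<rho>) - ln (1 + \<rho>) - ln \<sigma> / (1 + \<rho>)"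
proof -
  define w where "w = 1 / (1 + \<rho>)"
  define x where "x = \<sigma> - 1"
  have w: "0 < w" "w \<le> 1" and x: "\<eta> \<le> x" using assms by (auto simp: w_def x_def)
  have weight: "1 / (1 + 2 * S) \<le> min w (1 - w)"
  proof -
    have "1 / (1 + 2 * S) \<le> w" unfolding w_def using assms by (intro divide_left_mono) auto
    moreover have "1 / (1 + 2 * S) \<le> 1 / 3" using assms by (simp add: divide_simps)
    moreover have "1 / 3 \<le> 1 - w" using assms by (simp add: w_def divide_simps)
    ultimately show ?thesis by simp
  qed
  have spread: "ln (1 + \<eta>\<^sup>2 / (4 * S)) \<le> ln (1 + x\<^sup>2 / (4 * (1 + x)))"
  proof -
    have "\<eta>\<^sup>2 \<le> x\<^sup>2" using assms x by (intro power_mono) auto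
    hence "\<eta>\<^sup>2 / (4 * S) \<le> x\<^sup>2 / (4 * (1 + x))"
      using assms x by (intro frac_le) (auto simp: x_def)
    moreover have "0 < 1 + \<eta>\<^sup>2 / (4 * S)" using assms by (intro add_pos_nonneg) auto
    ultimately show ?thesis by simp
  qed
  have "0 \<le> ln (1 + \<eta>\<^sup>2 / (4 * S))" using assms by simp
  hence "1 / (1 + 2 * S) * ln (1 + \<eta>\<^sup>2 / (4 * S)) \<le> min w (1 - w) * ln (1 + x\<^sup>2 / (4 * (1 + x)))"
    using weight spread w by (intro mult_mono) auto
  hence "ln (1 + \<eta>\<^sup>2 / (4 * S)) / (1 + 2 * S) \<le> min w (1 - w) * ln (1 + x\<^sup>2 / (4 * (1 + x)))"
    by simp
  also have "\<dots> \<le> ln (1 + w * x) - w * ln (1 + x)" using ln_mean_gain[OF w] x assms by simp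
  also have "1 + w * x = (\<sigma> + \<rho>) / (1 + \<rho>)" using assms by (simp add: w_def x_def field_simps)
  finally show ?thesis using assms by (simp add: ln_div w_def x_def)
qed

(* The positive gain in the main inequality for \<sigma> in the band [1+\<eta>, S]: the first
   term comes from \<rho> far from \<sigma>, the second from \<rho> comparable to \<sigma>. *)
definition band_gain :: "real \<Rightarrow> real \<Rightarrow> real" where
  "band_gain \<eta> S = min (ln (1 + \<eta> / 9)) (2 * ln (1 + \<eta>\<^sup>2 / (4 * S)) / (1 + 2 * S))"

lemma band_gain_pos:
  assumes "0 < \<eta>" "1 + \<eta> \<le> S"
  shows "0 < band_gain \<eta> S"
proof -
  have "0 < \<eta>\<^sup>2 / (4 * S)" using assms by simp
  hence "0 < ln (1 + \<eta>\<^sup>2 / (4 * S))" by simp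
  thus ?thesis using assms by (simp add: band_gain_def)
qed

lemma ln_quartic_lower_bound:
  fixes \<sigma> \<rho> \<epsilon> \<eta> S :: real
  assumes eps: "0 < \<epsilon>" "\<epsilon> < 1" "\<epsilon> \<le> \<sigma>" and rho: "0 \<le> \<rho>" and eta: "0 < \<eta>"
  shows "(1 - \<rho>) / (1 + \<rho>) * ln \<sigma> + ln \<epsilon> + 2 * ln (1 + \<rho>)
           + band_gain \<eta> S * indicator {1 + \<eta> .. S} \<sigma>
         \<le> ln ((\<sigma> - \<rho>)\<^sup>2 + 4 * \<rho> * \<epsilon>)"
proof -
  have sigma: "0 < \<sigma>" using eps by linarith
  define D where "D = ln (\<sigma> + \<rho>) - ln (1 + \<rho>) - ln \<sigma> / (1 + \<rho>)"
  have split: "(1 - \<rho>) / (1 + \<rho>) * ln \<sigma> + ln \<epsilon> + 2 * ln (1 + \<rho>)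
                 = (ln \<epsilon> + 2 * ln (\<sigma> + \<rho>) - ln \<sigma>) - 2 * D"
    unfolding lambda_log_split[OF rho] D_def by simp
  have D_nonneg: "0 \<le> D" using ln_mean_lower_bound[OF sigma rho] by (simp add: D_def)
  have base: "ln 1 + ln \<epsilon> + 2 * ln (\<sigma> + \<rho>) - ln \<sigma> \<le> ln ((\<sigma> - \<rho>)\<^sup>2 + 4 * \<rho> * \<epsilon>)"
    using eps sigma rho by (intro ln_quartic_from_factor) auto
  show ?thesis
  proof (cases "\<sigma> \<in> {1 + \<eta> .. S}")
    case False
    thus ?thesis using split D_nonneg base by simp
  next
    case band: True
    show ?thesis
    proof (cases "\<rho> \<le> \<sigma> / 2 \<or> 2 * \<sigma> \<le> \<rho>")
      case far: True
      have "(\<sigma> + \<rho>)\<^sup>2 \<le> (3 * \<bar>\<sigma> - \<rho>\<bar>)\<^sup>2" using far rho sigma by (intro power_mono) auto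
      hence close: "(\<sigma> + \<rho>)\<^sup>2 \<le> 9 * (\<sigma> - \<rho>)\<^sup>2" by (simp add: power_mult_distrib)
      have "\<eta> * \<epsilon> \<le> \<eta>" using eps eta by (simp add: mult_left_le)
      hence "\<eta> * \<epsilon> \<le> \<sigma> - \<epsilon>" using band eps by auto
      hence "(1 + \<eta> / 9 - 1) * \<epsilon> * (\<sigma> + \<rho>)\<^sup>2 \<le> (\<sigma> - \<epsilon>) * (\<sigma> - \<rho>)\<^sup>2"
        using close eps eta mult_mono[of "\<eta> * \<epsilon>" "\<sigma> - \<epsilon>" "(\<sigma> + \<rho>)\<^sup>2" "9 * (\<sigma> - \<rho>)\<^sup>2"]
        by (simp add: algebra_simps)
      hence "ln (1 + \<eta> / 9) + ln \<epsilon> + 2 * ln (\<sigma> + \<rho>) - ln \<sigma> \<le> ln ((\<sigma> - \<rho>)\<^sup>2 + 4 * \<rho> * \<epsilon>)"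
        using eps sigma rho eta by (intro ln_quartic_from_factor) auto
      moreover have "band_gain \<eta> S \<le> ln (1 + \<eta> / 9)" by (simp add: band_gain_def)
      ultimately show ?thesis using split D_nonneg band by simp
    next
      case near: False
      have "ln (1 + \<eta>\<^sup>2 / (4 * S)) / (1 + 2 * S) \<le> D"
        unfolding D_def using near band eta by (intro ln_mean_gain_near) auto
      moreover have "band_gain \<eta> S \<le> 2 * ln (1 + \<eta>\<^sup>2 / (4 * S)) / (1 + 2 * S)"
        by (simp add: band_gain_def)
      ultimately show ?thesis using split base band by simp
    qed
  qed
qed

(* The central inequality in the original variables: the product of the two
   reflected factors equals b^4 ((\<sigma>-\<rho>)^2 + 4\<rho>\<epsilon>). *)
lemma ln_pair_lower_bound:
  fixes b r t q \<eta> S :: real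
  assumes b: "0 < b" and r: "1 < r" and eta: "0 < \<eta>"
  defines "\<sigma> \<equiv> (q / b)\<^sup>2 + (1 / r)\<^sup>2" and "\<rho> \<equiv> (t / b)\<^sup>2"
  shows "4 * ln b - 2 * ln r + 2 * ln (1 + \<rho>) + (1 - \<rho>) / (1 + \<rho>) * ln \<sigma>
           + band_gain \<eta> S * indicator {1 + \<eta> .. S} \<sigma>
         \<le> ln ((t - q)\<^sup>2 + (b / r)\<^sup>2) + ln ((t + q)\<^sup>2 + (b / r)\<^sup>2)"
proof -
  define \<epsilon> where "\<epsilon> = (1 / r)\<^sup>2"
  have eps: "0 < \<epsilon>" "\<epsilon> < 1" "\<epsilon> \<le> \<sigma>" using r by (auto simp: \<epsilon>_def \<sigma>_def divide_simps)
  have c_pos: "0 < (b / r)\<^sup>2" using b r by simp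
  have product: "((t - q)\<^sup>2 + (b / r)\<^sup>2) * ((t + q)\<^sup>2 + (b / r)\<^sup>2) = b ^ 4 * ((\<sigma> - \<rho>)\<^sup>2 + 4 * \<rho> * \<epsilon>)"
    using b r by (simp add: \<sigma>_def \<rho>_def \<epsilon>_def field_simps power2_eq_square power4_eq_xxxx)
  have quartic_pos: "0 < (\<sigma> - \<rho>)\<^sup>2 + 4 * \<rho> * \<epsilon>"
  proof -
    have "0 < ((t - q)\<^sup>2 + (b / r)\<^sup>2) * ((t + q)\<^sup>2 + (b / r)\<^sup>2)"
      using c_pos by (intro mult_pos_pos add_nonneg_pos) auto
    thus ?thesis using b unfolding product by (simp add: zero_less_mult_iff)
  qed
  have "ln ((t - q)\<^sup>2 + (b / r)\<^sup>2) + ln ((t + q)\<^sup>2 + (b / r)\<^sup>2)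
          = ln (((t - q)\<^sup>2 + (b / r)\<^sup>2) * ((t + q)\<^sup>2 + (b / r)\<^sup>2))"
    using c_pos by (simp add: ln_mult add_nonneg_pos)
  also have "\<dots> = 4 * ln b + ln ((\<sigma> - \<rho>)\<^sup>2 + 4 * \<rho> * \<epsilon>)"
    unfolding product using b quartic_pos by (simp add: ln_mult ln_realpow)
  finally have pair: "ln ((t - q)\<^sup>2 + (b / r)\<^sup>2) + ln ((t + q)\<^sup>2 + (b / r)\<^sup>2)
                        = 4 * ln b + ln ((\<sigma> - \<rho>)\<^sup>2 + 4 * \<rho> * \<epsilon>)" .
  have "ln \<epsilon> = - 2 * ln r" using r by (simp add: \<epsilon>_def ln_div ln_realpow)
  moreover have "0 \<le> \<rho>" by (simp add: \<rho>_def)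
  ultimately show ?thesis using pair ln_quartic_lower_bound[OF eps _ eta, of \<rho> S] by simp
qed

lemma alpha_norm_sq:
  fixes \<zeta> :: complex and E q :: real
  assumes "Re (\<zeta> + 1 / \<zeta> + of_real E) = 0"
  shows "(cmod (alpha \<zeta> (q - E)))\<^sup>2 = (q / Im \<zeta>)\<^sup>2 + (1 / (cmod \<zeta>)\<^sup>2)\<^sup>2"
proof -
  have "Re \<zeta> + Re \<zeta> / ((Re \<zeta>)\<^sup>2 + (Im \<zeta>)\<^sup>2) + E = 0"
    using assms by (simp add: Re_divide cmod_power2)
  hence shift: "Re \<zeta> + Re \<zeta> / ((Re \<zeta>)\<^sup>2 + (Im \<zeta>)\<^sup>2) - (q - E) = - q" by linarith
  have "Re (alpha \<zeta> (q - E)) = (Re \<zeta> + Re \<zeta> / ((Re \<zeta>)\<^sup>2 + (Im \<zeta>)\<^sup>2) - (q - E)) / Im \<zeta>"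
    by (simp add: alpha_def)
  hence "Re (alpha \<zeta> (q - E)) = - (q / Im \<zeta>)" unfolding shift by simp
  moreover have "Im (alpha \<zeta> (q - E)) = 1 / (cmod \<zeta>)\<^sup>2" by (simp add: alpha_def cmod_power2)
  ultimately show ?thesis by (simp add: cmod_power2)
qed

lemma ln_ratio_integrand:
  fixes \<zeta> :: complex and E q w :: real
  assumes "Re (\<zeta> + 1 / \<zeta> + of_real E) = 0" and "0 < Im \<zeta>"
  shows "ln ((cmod \<zeta>)\<^sup>2 * (cmod (of_real w + 1 / \<zeta> - of_real (q - E)))\<^sup>2 / (cmod (of_real w - \<zeta>))\<^sup>2)
           = ln ((cmod \<zeta>)\<^sup>2) - ln ((w - Re \<zeta>)\<^sup>2 + (Im \<zeta>)\<^sup>2)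
             + ln ((w - Re \<zeta> - q)\<^sup>2 + (Im \<zeta> / (cmod \<zeta>)\<^sup>2)\<^sup>2)"
proof -
  have nz: "\<zeta> \<noteq> 0" using assms by auto
  have shift: "Re (1 / \<zeta>) = - Re \<zeta> - E" using assms by simp
  have "Re (of_real w + 1 / \<zeta> - of_real (q - E)) = w + Re (1 / \<zeta>) - (q - E)" by simp
  hence "Re (of_real w + 1 / \<zeta> - of_real (q - E)) = w - Re \<zeta> - q" unfolding shift by simp
  moreover have "Im (of_real w + 1 / \<zeta> - of_real (q - E)) = - (Im \<zeta> / (cmod \<zeta>)\<^sup>2)"
    by (simp add: Im_divide cmod_power2)
  ultimately have num: "(cmod (of_real w + 1 / \<zeta> - of_real (q - E)))\<^sup>2
                          = (w - Re \<zeta> - q)\<^sup>2 + (Im \<zeta> / (cmod \<zeta>)\<^sup>2)\<^sup>2"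
    unfolding cmod_power2[of "of_real w + 1 / \<zeta> - of_real (q - E)"] by (simp only: power2_minus)
  have den: "(cmod (of_real w - \<zeta>))\<^sup>2 = (w - Re \<zeta>)\<^sup>2 + (Im \<zeta>)\<^sup>2" by (simp add: cmod_power2)
  have "0 < (w - Re \<zeta> - q)\<^sup>2 + (Im \<zeta> / (cmod \<zeta>)\<^sup>2)\<^sup>2" "0 < (w - Re \<zeta>)\<^sup>2 + (Im \<zeta>)\<^sup>2"
    using assms nz by (auto intro: add_nonneg_pos)
  thus ?thesis unfolding num den using nz assms(2) by (simp add: ln_div ln_mult)
qed

lemma integral_symmetrization:
  fixes \<mu> :: "real measure" and f :: "real \<Rightarrow> real"
  assumes sets_mu: "sets \<mu> = sets borel" and symmetric: "distr \<mu> borel uminus = \<mu>"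
    and int: "integrable \<mu> f"
  shows "integrable \<mu> (\<lambda>q. f (- q))" and "(\<integral>q. f q + f (- q) \<partial>\<mu>) = 2 * integral\<^sup>L \<mu> f"
proof -
  have reflect: "uminus \<in> measurable \<mu> borel" by (subst measurable_cong_sets[OF sets_mu refl]) measurable
  have "f \<in> borel_measurable \<mu>" by (rule borel_measurable_integrable[OF int])
  hence f: "f \<in> borel_measurable borel" by (simp only: measurable_cong_sets[OF sets_mu refl])
  show int_reflected: "integrable \<mu> (\<lambda>q. f (- q))"
    using integrable_distr_eq[OF reflect f] int symmetric by simp
  have "(\<integral>q. f (- q) \<partial>\<mu>) = integral\<^sup>L \<mu> f"
    using integral_distr[OF reflect f] symmetric by simp
  thus "(\<integral>q. f q + f (- q) \<partial>\<mu>) = 2 * integral\<^sup>L \<mu> f" using int int_reflected by simp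
qed

lemma ln_shift_bound:
  fixes t q c :: real
  assumes "0 < c"
  shows "\<bar>ln ((t - q)\<^sup>2 + c) - ln (q\<^sup>2 + c)\<bar> \<le> ln (2 + 2 * t\<^sup>2 / c)"
proof -
  define K where "K = 2 + 2 * t\<^sup>2 / c"
  have K: "0 < K" using assms by (simp add: K_def add_pos_nonneg)
  have compare: "y\<^sup>2 + c \<le> K * (x\<^sup>2 + c)" if "\<bar>y\<bar> \<le> \<bar>x\<bar> + \<bar>t\<bar>" for x y
  proof -
    have "\<bar>y\<bar>\<^sup>2 \<le> (\<bar>x\<bar> + \<bar>t\<bar>)\<^sup>2" using that by (intro power_mono) auto
    hence "y\<^sup>2 \<le> (\<bar>x\<bar> + \<bar>t\<bar>)\<^sup>2" by simp
    also have "\<dots> \<le> 2 * x\<^sup>2 + 2 * t\<^sup>2"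
      using sum_squares_bound[of "\<bar>x\<bar>" "\<bar>t\<bar>"] by (simp add: power2_eq_square algebra_simps)
    also have "\<dots> \<le> 2 * x\<^sup>2 + 2 * t\<^sup>2 + c + 2 * t\<^sup>2 * x\<^sup>2 / c" using assms by simp
    also have "\<dots> = K * (x\<^sup>2 + c) - c" using assms by (simp add: K_def field_simps)
    finally show ?thesis by simp
  qed
  have ln_compare: "ln (y\<^sup>2 + c) \<le> ln K + ln (x\<^sup>2 + c)" if "\<bar>y\<bar> \<le> \<bar>x\<bar> + \<bar>t\<bar>" for x y
  proof -
    have "ln (y\<^sup>2 + c) \<le> ln (K * (x\<^sup>2 + c))"
      using compare[OF that] assms K by (simp add: add_nonneg_pos)
    moreover have "0 < x\<^sup>2 + c" using assms by (simp add: add_nonneg_pos)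
    ultimately show ?thesis using K by (simp add: ln_mult)
  qed
  have "ln ((t - q)\<^sup>2 + c) \<le> ln K + ln (q\<^sup>2 + c)" "ln (q\<^sup>2 + c) \<le> ln K + ln ((t - q)\<^sup>2 + c)"
    by (rule ln_compare; linarith)+
  thus ?thesis unfolding K_def by linarith
qed

lemma integrable_ln_shift:
  fixes \<mu> :: "real measure" and t c :: real
  assumes "finite_measure \<mu>" and "sets \<mu> = sets borel" and "0 < c"
    and "integrable \<mu> (\<lambda>q. ln (q\<^sup>2 + c))"
  shows "integrable \<mu> (\<lambda>q. ln ((t - q)\<^sup>2 + c))"
proof -
  have "(\<lambda>q. ln ((t - q)\<^sup>2 + c) - ln (q\<^sup>2 + c)) \<in> borel_measurable \<mu>"
    by (subst measurable_cong_sets[OF assms(2) refl]) measurable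
  hence "integrable \<mu> (\<lambda>q. ln ((t - q)\<^sup>2 + c) - ln (q\<^sup>2 + c))"
    by (intro finite_measure.integrable_const_bound[OF assms(1), where B = "ln (2 + 2 * t\<^sup>2 / c)"])
      (use ln_shift_bound[OF assms(3)] in auto)
  from Bochner_Integration.integrable_add[OF this assms(4)] show ?thesis by simp
qed

lemma ln_sq_scaled:
  fixes b r q :: real
  assumes "0 < b" and "0 < r"
  shows "ln (q\<^sup>2 + (b / r)\<^sup>2) = 2 * ln b + ln ((q / b)\<^sup>2 + (1 / r)\<^sup>2)"
proof -
  have "q\<^sup>2 + (b / r)\<^sup>2 = b\<^sup>2 * ((q / b)\<^sup>2 + (1 / r)\<^sup>2)" using assms by (simp add: field_simps)
  moreover have "0 < (q / b)\<^sup>2 + (1 / r)\<^sup>2" using assms by (simp add: add_nonneg_pos)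
  ultimately show ?thesis using assms by (simp add: ln_mult ln_realpow)
qed

lemma integrable_ln_shift_scaled:
  fixes \<mu> :: "real measure" and b r t :: real
  assumes "finite_measure \<mu>" and "sets \<mu> = sets borel" and "0 < b" and "0 < r"
    and "integrable \<mu> (\<lambda>q. ln ((q / b)\<^sup>2 + (1 / r)\<^sup>2))"
  shows "integrable \<mu> (\<lambda>q. ln ((t - q)\<^sup>2 + (b / r)\<^sup>2))"
proof (rule integrable_ln_shift[OF assms(1,2)])
  show "integrable \<mu> (\<lambda>q. ln (q\<^sup>2 + (b / r)\<^sup>2))"
    unfolding ln_sq_scaled[OF assms(3,4)]
    by (intro Bochner_Integration.integrable_add finite_measure.integrable_const[OF assms(1)] assms(5))
qed (use assms in simp)

(* A positive random variable with E[ln X] = 0 that is not a.s. equal to 1 puts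
   positive mass on some band [1+\<eta>, S]: otherwise X \<le> 1 a.s., forcing ln X = 0 a.s. *)
lemma positive_band_of_centered_log:
  fixes \<mu> :: "'a measure" and X :: "'a \<Rightarrow> real"
  assumes "prob_space \<mu>" and X_meas: "X \<in> borel_measurable \<mu>" and X_pos: "\<And>x. 0 < X x"
    and int: "integrable \<mu> (\<lambda>x. ln (X x))" and centered: "(\<integral>x. ln (X x) \<partial>\<mu>) = 0"
    and nondegenerate: "\<not> (AE x in \<mu>. X x = 1)"
  shows "\<exists>\<eta> S. 0 < \<eta> \<and> 0 < measure \<mu> {x \<in> space \<mu>. X x \<in> {1 + \<eta> .. S}}"
proof (rule ccontr)
  interpret prob_space \<mu> by fact
  define band where "band n = {x \<in> space \<mu>. X x \<in> {1 + 1 / Suc n .. Suc n}}" for n :: nat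
  assume no_band: "\<not> ?thesis"
  have "measure \<mu> (band n) = 0" for n
  proof -
    have "\<not> 0 < measure \<mu> (band n)"
      using no_band unfolding band_def by (metis of_nat_Suc zero_less_divide_1_iff of_nat_0_less_iff zero_less_Suc)
    thus ?thesis using measure_nonneg[of \<mu> "band n"] by linarith
  qed
  hence "band n \<in> null_sets \<mu>" for n
    unfolding band_def using X_meas by (intro null_setsI) (auto simp: emeasure_eq_measure)
  hence "AE x in \<mu>. \<forall>n. x \<notin> band n" by (simp add: AE_all_countable AE_not_in)
  hence below_one: "AE x in \<mu>. X x \<le> 1"
  proof (rule AE_mp, intro AE_I2 impI)
    fix x assume x: "x \<in> space \<mu>" and outside: "\<forall>n. x \<notin> band n"
    show "X x \<le> 1"
    proof (rule ccontr)
      assume "\<not> X x \<le> 1"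
      define n where "n = nat \<lceil>max (X x) (1 / (X x - 1))\<rceil>"
      have "X x \<le> Suc n" "1 / (X x - 1) \<le> Suc n" unfolding n_def by linarith+
      moreover have "0 < X x - 1" using \<open>\<not> X x \<le> 1\<close> by simp
      ultimately have "1 + 1 / Suc n \<le> X x" "X x \<le> Suc n" by (auto simp: field_simps)
      thus False using outside x unfolding band_def by auto
    qed
  qed
  have "AE x in \<mu>. 0 \<le> - ln (X x)"
    using below_one by eventually_elim (use X_pos in simp)
  hence "AE x in \<mu>. - ln (X x) = 0"
    using integral_nonneg_eq_0_iff_AE[of \<mu> "\<lambda>x. - ln (X x)"] int centered by simp
  hence "AE x in \<mu>. X x = 1" by eventually_elim (use X_pos in simp)
  with nondegenerate show False by contradiction
qed

(* Integrated form of ln_pair_lower_bound: averaging over q and -q and using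
   E[ln \<sigma>] = 0, twice the integral of the shifted logarithm is bounded below by
   an explicit constant plus the gain times the probability of the band. *)
lemma integral_pair_lower_bound:
  fixes \<mu> :: "real measure" and b r t \<eta> S :: real
  assumes "prob_space \<mu>" and sets_mu: "sets \<mu> = sets borel" and symmetric: "distr \<mu> borel uminus = \<mu>"
    and b: "0 < b" and r: "1 < r" and eta: "0 < \<eta>"
    and int: "integrable \<mu> (\<lambda>q. ln ((q / b)\<^sup>2 + (1 / r)\<^sup>2))"
    and centered: "(\<integral>q. ln ((q / b)\<^sup>2 + (1 / r)\<^sup>2) \<partial>\<mu>) = 0"
  shows "4 * ln b - 2 * ln r + 2 * ln (1 + (t / b)\<^sup>2)
           + band_gain \<eta> S * measure \<mu> {q. (q / b)\<^sup>2 + (1 / r)\<^sup>2 \<in> {1 + \<eta> .. S}}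
         \<le> 2 * (\<integral>q. ln ((t - q)\<^sup>2 + (b / r)\<^sup>2) \<partial>\<mu>)"
proof -
  interpret prob_space \<mu> by fact
  have space: "space \<mu> = UNIV" using sets_eq_imp_space_eq[OF sets_mu] by simp
  define c where "c = (b / r)\<^sup>2"
  define \<sigma> where "\<sigma> q = (q / b)\<^sup>2 + (1 / r)\<^sup>2" for q
  define \<rho> where "\<rho> = (t / b)\<^sup>2"
  define L where "L q = ln ((t - q)\<^sup>2 + c)" for q
  define B where "B = {q. \<sigma> q \<in> {1 + \<eta> .. S}}"
  have int_L: "integrable \<mu> L"
    using integrable_ln_shift_scaled[OF finite_measure_axioms sets_mu b _ int, of t] r
    by (simp add: L_def[abs_def] c_def)
  note symmetrized = integral_symmetrization[OF sets_mu symmetric int_L]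
  define R where "R q = 4 * ln b - 2 * ln r + 2 * ln (1 + \<rho>) + (1 - \<rho>) / (1 + \<rho>) * ln (\<sigma> q)
                          + band_gain \<eta> S * indicator B q" for q
  have R_le: "R q \<le> L q + L (- q)" for q
    using ln_pair_lower_bound[OF b r eta, of t q S]
    by (simp add: R_def L_def c_def \<sigma>_def \<rho>_def B_def indicator_def)
  have B_sets: "B \<in> sets \<mu>" unfolding sets_mu B_def \<sigma>_def by measurable
  have "integrable \<mu> (\<lambda>q. ln (\<sigma> q))" using int by (simp add: \<sigma>_def[abs_def])
  moreover have "integrable \<mu> (indicator B :: real \<Rightarrow> real)"
    using B_sets by (simp add: emeasure_eq_measure)
  ultimately have int_R: "integrable \<mu> R" and integral_R:
    "integral\<^sup>L \<mu> R = 4 * ln b - 2 * ln r + 2 * ln (1 + \<rho>) + band_gain \<eta> S * measure \<mu> B"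
    using centered B_sets space prob_space unfolding R_def[abs_def] \<sigma>_def
    by (simp_all add: Bochner_Integration.integral_add)
  have "integral\<^sup>L \<mu> R \<le> 2 * integral\<^sup>L \<mu> L"
    unfolding symmetrized(2)[symmetric] using int_R int_L symmetrized(1) R_le
    by (intro integral_mono) auto
  thus ?thesis unfolding integral_R by (simp add: L_def[abs_def] c_def B_def \<sigma>_def \<rho>_def)
qed

lemma shifted_log_integral_lower_bound:
  fixes \<mu> :: "real measure" and b r t \<eta> S :: real
  assumes prob: "prob_space \<mu>" and sets_mu: "sets \<mu> = sets borel" and symmetric: "distr \<mu> borel uminus = \<mu>"
    and b: "0 < b" and r: "1 < r" and eta: "0 < \<eta>"
    and int: "integrable \<mu> (\<lambda>q. ln ((q / b)\<^sup>2 + (1 / r)\<^sup>2))"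
    and centered: "(\<integral>q. ln ((q / b)\<^sup>2 + (1 / r)\<^sup>2) \<partial>\<mu>) = 0"
  shows "band_gain \<eta> S * measure \<mu> {q. (q / b)\<^sup>2 + (1 / r)\<^sup>2 \<in> {1 + \<eta> .. S}} / 2
           \<le> (\<integral>q. ln r - ln (t\<^sup>2 + b\<^sup>2) + ln ((t - q)\<^sup>2 + (b / r)\<^sup>2) \<partial>\<mu>)"
proof -
  interpret prob_space \<mu> by fact
  have space: "space \<mu> = UNIV" using sets_eq_imp_space_eq[OF sets_mu] by simp
  have "integrable \<mu> (\<lambda>q. ln ((t - q)\<^sup>2 + (b / r)\<^sup>2))"
    using integrable_ln_shift_scaled[OF finite_measure_axioms sets_mu b _ int] r by simp
  hence "(\<integral>q. ln r - ln (t\<^sup>2 + b\<^sup>2) + ln ((t - q)\<^sup>2 + (b / r)\<^sup>2) \<partial>\<mu>)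
           = ln r - ln (t\<^sup>2 + b\<^sup>2) + (\<integral>q. ln ((t - q)\<^sup>2 + (b / r)\<^sup>2) \<partial>\<mu>)"
    using space prob_space by (simp add: Bochner_Integration.integral_add)
  moreover have "ln (t\<^sup>2 + b\<^sup>2) = 2 * ln b + ln (1 + (t / b)\<^sup>2)"
    using ln_sq_scaled[OF b, of 1 t] by (simp add: add.commute)
  ultimately show ?thesis
    using integral_pair_lower_bound[OF prob sets_mu symmetric b r eta int centered, of t S] by simp
qed

theorem proposition5p3:
  fixes \<mu> :: "real measure" and E :: real and \<zeta> :: complex
  assumes prob: "prob_space \<mu>"
    and sets_mu: "sets \<mu> = sets borel"
    and symmetric: "distr \<mu> borel uminus = \<mu>"
    and log_moment: "integrable \<mu> (\<lambda>q. ln (1 + q\<^sup>2))"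
    and second_moment_pos: "(\<integral>\<^sup>+ q. ennreal (q\<^sup>2) \<partial>\<mu>) > 0"
    and not_single_point: "\<not> (\<exists>c. AE q in \<mu>. q\<^sup>2 = c)"
    and upper: "Im \<zeta> > 0"
    and abs_gt1: "cmod \<zeta> > 1"
    and re_zero: "Re (\<zeta> + 1 / \<zeta> + of_real E) = 0"
    and lyap_int: "integrable \<mu> (\<lambda>q. ln ((cmod (alpha \<zeta> (q - E)))\<^sup>2))"
    and lyap_zero: "(\<integral> q. ln ((cmod (alpha \<zeta> (q - E)))\<^sup>2) \<partial>\<mu>) = 0"
  shows "(INF w::real. ereal (\<integral> q. ln ((cmod \<zeta>)\<^sup>2 * (cmod (of_real w + 1 / \<zeta> - of_real (q - E)))\<^sup>2
                                   / (cmod (of_real w - \<zeta>))\<^sup>2) \<partial>\<mu>)) > 0"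
proof -
  define b where "b = Im \<zeta>"
  define r where "r = (cmod \<zeta>)\<^sup>2"
  define \<sigma> where "\<sigma> q = (q / b)\<^sup>2 + (1 / r)\<^sup>2" for q
  have b: "0 < b" using upper by (simp add: b_def)
  have r: "1 < r" using abs_gt1 less_1_mult[of "cmod \<zeta>" "cmod \<zeta>"] by (simp add: r_def power2_eq_square)
  have lyapunov: "ln ((cmod (alpha \<zeta> (q - E)))\<^sup>2) = ln (\<sigma> q)" for q
    using alpha_norm_sq[OF re_zero] by (simp add: \<sigma>_def b_def r_def)
  have "\<not> (AE q in \<mu>. \<sigma> q = 1)"
  proof
    assume "AE q in \<mu>. \<sigma> q = 1"
    hence "AE q in \<mu>. q\<^sup>2 = b\<^sup>2 * (1 - (1 / r)\<^sup>2)"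
      by eventually_elim (use b in \<open>simp add: \<sigma>_def field_simps\<close>)
    with not_single_point show False by blast
  qed
  moreover have "\<sigma> \<in> borel_measurable \<mu>" unfolding \<sigma>_def[abs_def]
    by (subst measurable_cong_sets[OF sets_mu refl]) measurable
  moreover have "0 < \<sigma> q" for q using r by (simp add: \<sigma>_def add_nonneg_pos)
  ultimately have "\<exists>\<eta> S. 0 < \<eta> \<and> 0 < measure \<mu> {q \<in> space \<mu>. \<sigma> q \<in> {1 + \<eta> .. S}}"
    using lyap_int lyap_zero unfolding lyapunov by (intro positive_band_of_centered_log[OF prob])
  then obtain \<eta> S where eta: "0 < \<eta>" and band: "0 < measure \<mu> {q. \<sigma> q \<in> {1 + \<eta> .. S}}"
    using sets_eq_imp_space_eq[OF sets_mu] by auto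
  define \<delta> where "\<delta> = band_gain \<eta> S * measure \<mu> {q. \<sigma> q \<in> {1 + \<eta> .. S}} / 2"
  have "1 + \<eta> \<le> S" using band by (cases "1 + \<eta> \<le> S") auto
  hence gap: "0 < \<delta>" using band_gain_pos[OF eta] band by (simp add: \<delta>_def)
  have bound: "\<delta> \<le> (\<integral> q. ln ((cmod \<zeta>)\<^sup>2 * (cmod (of_real w + 1 / \<zeta> - of_real (q - E)))\<^sup>2
                                   / (cmod (of_real w - \<zeta>))\<^sup>2) \<partial>\<mu>)" for w
    using shifted_log_integral_lower_bound[OF prob sets_mu symmetric b r eta, where t = "w - Re \<zeta>"]
      lyap_int lyap_zero
    unfolding ln_ratio_integrand[OF re_zero upper] lyapunov
    by (simp add: \<delta>_def \<sigma>_def b_def r_def)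
  show ?thesis
    by (rule order.strict_trans2[where b = "ereal \<delta>"]) (use gap bound in \<open>auto intro: INF_greatest\<close>)
qed

end
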